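(* Let $\kappa\ge2$. Every tensor $P$ in $\mathrm{EE}_\kappa(((a,b),c))$ lies in the algebraic variety defined by the degree-$(2\kappa+1)$ polynomials given by all $(2\kappa+1)\times(2\kappa+1)$ minors of each of the $2\kappa$ matrices (for $k\in[\kappa]$) $$\begin{pmatrix}0&P_{\cdot\cdot k}&P_{\cdot+\cdot}\\-P_{\cdot\cdot k}^T&0&P_{+\cdot\cdot}\\-P_{\cdot+\cdot}^T&-P_{+\cdot\cdot}^T&0\end{pmatrix}\quad\text{and}\quad\begin{pmatrix}0&P_{\cdot+\cdot}^T&P_{+\cdot\cdot}^T\\-P_{\cdot+\cdot}&0&P_{\cdot\cdot k}\\-P_{+\cdot\cdot}&-P_{\cdot\cdot k}^T&0\end{pmatrix}.$$ That is, each of these $3\kappa\times 3\kappa$ matrices has rank at most $2\kappa$.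
   Context: A $\kappa$-state site pattern probability tensor on $X$ ($|X|=n$) is an $n$-way $\kappa\times\cdots\times\kappa$ array with one index per taxon, non-negative entries summing to 1. $P_Y$ is the marginalization to $Y\subseteq X$; $\psi^+|_Y$ is the induced rooted subtree; a 2-clade is a pair of leaves that are exactly the leaf descendants of some vertex. $\mathrm{UE}_\kappa(\psi^+)$: all such tensors $P$ such that for every $Y\subseteq X$ and every 2-clade $\{x,y\}$ of $\psi^+|_Y$, $P_Y$ is invariant under exchanging the $x$ and $y$ indices. For a $\kappa\times\kappa$ matrix $M$, $P*_kM$ is the tensor whose entry at $(i_1,\dots,i_n)$ is the $i_k$-th entry of $vM$, $v$ the row vector obtained by fixing all indices $\ell\ne k$ to $i_\ell$; $P*(M_1,\dots,M_n)=(\cdots(P*_1M_1)\cdots)*_nM_n$. $\mathrm{EE}_\kappa(\psi^+)$: all $\kappa$-state site pattern probability tensors $P$ such that $P*(M_1,\dots,M_n)=\tilde P$ for some non-singular Markov matrices $M_i$ and some non-negative $\tilde P\in\mathrm{UE}_\kappa(\psi^+)$. For a 3-way tensor $P=(p_{ijk})$ with indices ordered $a,b,c$: $P_{+\cdot\cdot}$ has $(j,k)$-entry $\sum_ip_{ijk}$; $P_{\cdot+\cdot}$ has $(i,k)$-entry $\sum_jp_{ijk}$; $P_{\cdot\cdot k}$ has $(i,j)$-entry $p_{ijk}$; $^T$ is transpose. *)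

theory Defs
  imports "HOL-Analysis.Analysis"
begin

text \<open>Taxa form a finite type 'x (X = UNIV), states a finite type 'k with kappa = CARD('k).
  A tensor assigns a real number to each index assignment (one state per taxon).\<close>

type_synonym ('x, 'k) tensor = "('x \<Rightarrow> 'k) \<Rightarrow> real"

definition ptensor :: "('x::finite, 'k::finite) tensor \<Rightarrow> bool" where
  "ptensor P \<longleftrightarrow> (\<forall>i. 0 \<le> P i) \<and> (\<Sum>i\<in>UNIV. P i) = 1"

text \<open>Marginalization to Y: the value depends only on the restriction of j to Y.\<close>
definition marg :: "('x::finite, 'k::finite) tensor \<Rightarrow> 'x set \<Rightarrow> ('x, 'k) tensor" where
  "marg P Y j = (\<Sum>i\<in>{i. \<forall>y\<in>Y. i y = j y}. P i)"

text \<open>A rooted X-tree is represented by its set of clusters (leaf-descendant sets of vertices).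
  The clusters of the induced (degree-2 suppressed) subtree on Y are the nonempty
  intersections of clusters with Y.\<close>

definition induced_clusters :: "'x set set \<Rightarrow> 'x set \<Rightarrow> 'x set set" where
  "induced_clusters H Y = {C \<inter> Y | C. C \<in> H} - {{}}"

definition two_clade :: "'x set set \<Rightarrow> 'x set \<Rightarrow> 'x \<Rightarrow> 'x \<Rightarrow> bool" where
  "two_clade H Y x y \<longleftrightarrow> x \<noteq> y \<and> {x, y} \<in> induced_clusters H Y"

definition UE :: "'x set set \<Rightarrow> ('x::finite, 'k::finite) tensor set" where
  "UE H = {P. ptensor P \<and>
     (\<forall>Y x y. two_clade H Y x y \<longrightarrow>
        (\<forall>j. marg P Y j = marg P Y (j \<circ> Transposition.transpose x y)))}"

definition markov :: "real^'k^'k \<Rightarrow> bool" where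
  "markov M \<longleftrightarrow> (\<forall>r c. 0 \<le> M $ r $ c) \<and> (\<forall>r. (\<Sum>c\<in>UNIV. M $ r $ c) = 1)"

text \<open>P * (M_x)_x: each index x is acted on by the row-vector product v M_x;
  written out as one sum (the single-index actions commute).\<close>
definition act :: "('x::finite, 'k::finite) tensor \<Rightarrow> ('x \<Rightarrow> real^'k^'k) \<Rightarrow> ('x, 'k) tensor" where
  "act P M i = (\<Sum>j\<in>UNIV. P j * (\<Prod>x\<in>UNIV. M x $ (j x) $ (i x)))"

definition EE :: "'x set set \<Rightarrow> ('x::finite, 'k::finite) tensor set" where
  "EE H = {P. ptensor P \<and> (\<exists>M Pt. (\<forall>x. markov (M x) \<and> invertible (M x)) \<and>
      (\<forall>i. 0 \<le> Pt i) \<and> Pt \<in> UE H \<and> act P M = Pt)}"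

datatype taxon = Ta | Tb | Tc

lemma UNIV_taxon: "(UNIV :: taxon set) = {Ta, Tb, Tc}"
  using taxon.exhaust by auto

instance taxon :: finite
  by standard (simp add: UNIV_taxon)

definition tree_ab_c :: "taxon set set" where
  "tree_ab_c = {{Ta}, {Tb}, {Tc}, {Ta, Tb}, {Ta, Tb, Tc}}"

definition ent :: "(taxon, 'k) tensor \<Rightarrow> 'k \<Rightarrow> 'k \<Rightarrow> 'k \<Rightarrow> real" where
  "ent P i j k = P (\<lambda>t. case t of Ta \<Rightarrow> i | Tb \<Rightarrow> j | Tc \<Rightarrow> k)"

text \<open>P_{..k}: (i,j) entry p_ijk; P_{.+.}: (i,k) entry sum_j p_ijk; P_{+..}: (j,k) entry sum_i p_ijk.\<close>
definition slice :: "(taxon, 'k::finite) tensor \<Rightarrow> 'k \<Rightarrow> real^'k^'k" where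
  "slice P k = (\<chi> i j. ent P i j k)"
definition margB :: "(taxon, 'k::finite) tensor \<Rightarrow> real^'k^'k" where
  "margB P = (\<chi> i k. \<Sum>j\<in>UNIV. ent P i j k)"
definition margA :: "(taxon, 'k::finite) tensor \<Rightarrow> real^'k^'k" where
  "margA P = (\<chi> j k. \<Sum>i\<in>UNIV. ent P i j k)"

text \<open>Block matrix [[0,X,Y],[-X^T,0,Z],[-Y^T,-Z^T,0]], index type 'k + 'k + 'k.\<close>
definition skew3 :: "real^'k^'k \<Rightarrow> real^'k^'k \<Rightarrow> real^'k^'k \<Rightarrow> real^('k + 'k + 'k)^('k + 'k + 'k)" where
  "skew3 X Y Z = (\<chi> r c. case (r, c) of
       (Inl i, Inr (Inl j)) \<Rightarrow> X $ i $ j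
     | (Inl i, Inr (Inr j)) \<Rightarrow> Y $ i $ j
     | (Inr (Inl i), Inl j) \<Rightarrow> - X $ j $ i
     | (Inr (Inl i), Inr (Inr j)) \<Rightarrow> Z $ i $ j
     | (Inr (Inr i), Inl j) \<Rightarrow> - Y $ j $ i
     | (Inr (Inr i), Inr (Inl j)) \<Rightarrow> - Z $ j $ i
     | _ \<Rightarrow> 0)"

end

theory Submission
  imports Defs
begin

text \<open>Changing basis at the leaves a, b, c by the Markov matrices acts on both block matrices
  as a block-diagonal congruence, which preserves rank. After the change the tensor is
  symmetric in a and b, and the induced 2-clade {a, c} makes its (a,c)-marginal T symmetric;
  inverting the matrix at c writes the transformed slice as a combination S of symmetric
  slices. So it suffices to bound the rank of the block matrices with blocks S, T, T and
  T, T, S, and the image of each is parametrised linearly by two vectors of length \<kappa>.\<close>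

definition vec3 :: "real^'k \<Rightarrow> real^'k \<Rightarrow> real^'k \<Rightarrow> real^('k + 'k + 'k)" where
  "vec3 p q r = (\<chi> s. case s of Inl i \<Rightarrow> p $ i | Inr (Inl i) \<Rightarrow> q $ i | Inr (Inr i) \<Rightarrow> r $ i)"

lemma vec3_cases:
  obtains p q r where "v = vec3 p q r"
proof
  show "v = vec3 (\<chi> i. v $ Inl i) (\<chi> i. v $ Inr (Inl i)) (\<chi> i. v $ Inr (Inr i))"
    by (simp add: vec3_def vec_eq_iff split: sum.split)
qed

lemma vec3_add: "vec3 p q r + vec3 p' q' r' = vec3 (p + p') (q + q') (r + r')"
  and vec3_scaleR: "c *\<^sub>R vec3 p q r = vec3 (c *\<^sub>R p) (c *\<^sub>R q) (c *\<^sub>R r)"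
  by (simp_all add: vec3_def vec_eq_iff split: sum.split)

lemma sum_UNIV_Plus:
  fixes f :: "('a::finite + 'b::finite) \<Rightarrow> 'c::comm_monoid_add"
  shows "(\<Sum>s\<in>UNIV. f s) = (\<Sum>i\<in>UNIV. f (Inl i)) + (\<Sum>i\<in>UNIV. f (Inr i))"
  using sum.Plus[of "UNIV::'a set" "UNIV::'b set" f] by (simp add: o_def)

lemma skew3_mult_vec3:
  "skew3 X Y Z *v vec3 p q r =
     vec3 (X *v q + Y *v r) (Z *v r - transpose X *v p) (- (transpose Y *v p) - transpose Z *v q)"
  by (auto simp: vec_eq_iff matrix_vector_mult_def skew3_def vec3_def sum_UNIV_Plus transpose_def
      sum_negf sum_subtractf split: sum.split)

definition diag3 :: "real^'k^'k \<Rightarrow> real^'k^'k \<Rightarrow> real^'k^'k \<Rightarrow> real^('k + 'k + 'k)^('k + 'k + 'k)" where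
  "diag3 A B C = (\<chi> r c. case (r, c) of
       (Inl i, Inl j) \<Rightarrow> A $ i $ j
     | (Inr (Inl i), Inr (Inl j)) \<Rightarrow> B $ i $ j
     | (Inr (Inr i), Inr (Inr j)) \<Rightarrow> C $ i $ j
     | _ \<Rightarrow> 0)"

lemma diag3_mult_vec3: "diag3 A B C *v vec3 p q r = vec3 (A *v p) (B *v q) (C *v r)"
  by (auto simp: vec_eq_iff matrix_vector_mult_def diag3_def vec3_def sum_UNIV_Plus split: sum.split)

lemma matrix_eq_vec3:
  fixes G H :: "real^('k::finite + 'k + 'k)^'m"
  assumes "\<And>p q r. G *v vec3 p q r = H *v vec3 p q r"
  shows "G = H"
  by (metis assms matrix_eq vec3_cases)

lemma diag3_mult: "diag3 A B C ** diag3 A' B' C' = diag3 (A ** A') (B ** B') (C ** C')"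
  by (rule matrix_eq_vec3) (simp add: matrix_vector_mul_assoc[symmetric] diag3_mult_vec3)

lemma diag3_mat_1: "diag3 (mat 1) (mat 1) (mat 1) = mat 1"
  by (rule matrix_eq_vec3) (simp add: diag3_mult_vec3)

lemma invertible_diag3:
  assumes "invertible A" "invertible B" "invertible C"
  shows "invertible (diag3 A B C)"
  using assms unfolding invertible_def by (metis diag3_mult diag3_mat_1)

lemma matrix_vector_mult_uminus_right: "A *v (- x) = - (A *v x)" for A :: "'a::ring_1^'n^'m"
  using matrix_vector_mult_diff_distrib[of A 0 x] by simp

lemma skew3_congruence:
  "diag3 (transpose A) (transpose B) (transpose C) ** skew3 X Y Z ** diag3 A B C
     = skew3 (transpose A ** X ** B) (transpose A ** Y ** C) (transpose B ** Z ** C)"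
  by (rule matrix_eq_vec3)
     (simp add: matrix_vector_mul_assoc[symmetric] diag3_mult_vec3 skew3_mult_vec3
       matrix_transpose_mul matrix_vector_right_distrib matrix_vector_mult_diff_distrib
       matrix_vector_mult_uminus_right del: transpose_matrix_vector)

lemma rank_mult_invertible:
  fixes G :: "real^'n^'m"
  assumes "invertible E" "invertible D"
  shows "rank (E ** G ** D) = rank G"
proof (rule antisym)
  show "rank (E ** G ** D) \<le> rank G"
    by (metis rank_mul_le_left rank_mul_le_right order_trans)
  obtain E' D' where "E' ** E = mat 1" "D ** D' = mat 1"
    using assms unfolding invertible_def by blast
  then have "G = E' ** (E ** G ** D) ** D'"
    by (simp add: matrix_mul_assoc) (simp add: matrix_mul_assoc[symmetric])
  then show "rank G \<le> rank (E ** G ** D)"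
    by (metis rank_mul_le_left rank_mul_le_right order_trans)
qed

lemma rank_skew3_congruence:
  fixes A B C X Y Z :: "real^'k::finite^'k"
  assumes "invertible A" "invertible B" "invertible C"
  shows "rank (skew3 (transpose A ** X ** B) (transpose A ** Y ** C) (transpose B ** Z ** C))
    = rank (skew3 X Y Z)"
proof -
  have "invertible (diag3 (transpose A) (transpose B) (transpose C))" "invertible (diag3 A B C)"
    using assms by (simp_all add: invertible_diag3 transpose_invertible)
  then show ?thesis
    by (simp only: skew3_congruence[symmetric] rank_mult_invertible)
qed

lemma rank_le_of_range_subset:
  fixes G :: "real^'n^'m" and L :: "'a::euclidean_space \<Rightarrow> real^'m"
  assumes "linear L" "range ((*v) G) \<subseteq> range L"
  shows "rank G \<le> DIM('a)"
proof -
  have "rank G \<le> dim (range L)"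
    unfolding rank_dim_range using assms(2) by (simp add: dim_subset)
  also have "\<dots> \<le> DIM('a)"
    using dim_image_le[OF assms(1), of UNIV] by simp
  finally show ?thesis .
qed

lemma rank_skew3_symmetric_STT:
  fixes S T :: "real^'k::finite^'k"
  assumes "transpose S = S"
  shows "rank (skew3 S T T) \<le> 2 * CARD('k)"
proof -
  let ?L = "\<lambda>(u, b). vec3 (b + S *v u) b (- (transpose T *v u))"
  have "linear ?L"
  proof (rule linearI)
    fix x y :: "(real^'k) \<times> (real^'k)"
    show "?L (x + y) = ?L x + ?L y"
      by (cases x; cases y)
        (simp add: vec3_add matrix_vector_right_distrib add_ac del: transpose_matrix_vector)
  next
    fix c :: real and x :: "(real^'k) \<times> (real^'k)"
    show "?L (c *\<^sub>R x) = c *\<^sub>R ?L x"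
      by (cases x)
        (simp add: vec3_scaleR matrix_vector_mult_scaleR scaleR_add_right del: transpose_matrix_vector)
  qed
  moreover have "range ((*v) (skew3 S T T)) \<subseteq> range ?L"
  proof (rule image_subsetI)
    fix v :: "real^('k + 'k + 'k)"
    obtain p q r where "v = vec3 p q r" by (rule vec3_cases)
    then have "skew3 S T T *v v = ?L (p + q, T *v r - S *v p)"
      using assms by (simp add: skew3_mult_vec3 matrix_vector_right_distrib algebra_simps
          del: transpose_matrix_vector)
    then show "skew3 S T T *v v \<in> range ?L" by blast
  qed
  ultimately have "rank (skew3 S T T) \<le> DIM((real^'k) \<times> (real^'k))"
    by (rule rank_le_of_range_subset)
  then show ?thesis
    by simp
qed

lemma rank_skew3_symmetric_TTS:
  fixes S T :: "real^'k::finite^'k"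
  assumes "transpose S = S"
  shows "rank (skew3 T T S) \<le> 2 * CARD('k)"
proof -
  let ?L = "\<lambda>(u, b). vec3 (T *v u) b (b - S *v u)"
  have "linear ?L"
  proof (rule linearI)
    fix x y :: "(real^'k) \<times> (real^'k)"
    show "?L (x + y) = ?L x + ?L y"
      by (cases x; cases y) (simp add: vec3_add matrix_vector_right_distrib algebra_simps)
  next
    fix c :: real and x :: "(real^'k) \<times> (real^'k)"
    show "?L (c *\<^sub>R x) = c *\<^sub>R ?L x"
      by (cases x) (simp add: vec3_scaleR matrix_vector_mult_scaleR scaleR_diff_right)
  qed
  moreover have "range ((*v) (skew3 T T S)) \<subseteq> range ?L"
  proof (rule image_subsetI)
    fix v :: "real^('k + 'k + 'k)"
    obtain p q r where "v = vec3 p q r" by (rule vec3_cases)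
    moreover have "- (transpose T *v p) - transpose S *v q = (S *v r - transpose T *v p) - S *v (q + r)"
      using assms by (simp add: matrix_vector_right_distrib algebra_simps del: transpose_matrix_vector)
    ultimately have "skew3 T T S *v v = ?L (q + r, S *v r - transpose T *v p)"
      by (simp add: skew3_mult_vec3 matrix_vector_right_distrib del: transpose_matrix_vector)
    then show "skew3 T T S *v v \<in> range ?L" by blast
  qed
  ultimately have "rank (skew3 T T S) \<le> DIM((real^'k) \<times> (real^'k))"
    by (rule rank_le_of_range_subset)
  then show ?thesis
    by simp
qed

definition states3 :: "'k \<Rightarrow> 'k \<Rightarrow> 'k \<Rightarrow> taxon \<Rightarrow> 'k" where
  "states3 i j k = (\<lambda>t. case t of Ta \<Rightarrow> i | Tb \<Rightarrow> j | Tc \<Rightarrow> k)"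

lemma states3_apply [simp]: "states3 i j k Ta = i" "states3 i j k Tb = j" "states3 i j k Tc = k"
  by (simp_all add: states3_def)

lemma states3_eta: "states3 (f Ta) (f Tb) (f Tc) = f"
  by (rule ext, case_tac x) simp_all

lemma ent_states3: "ent P i j k = P (states3 i j k)"
  by (simp add: ent_def states3_def)

lemma sum_taxon_fun:
  fixes g :: "(taxon \<Rightarrow> 'k::finite) \<Rightarrow> 'a::comm_monoid_add"
  shows "(\<Sum>f\<in>UNIV. g f) = (\<Sum>k\<in>UNIV. \<Sum>j\<in>UNIV. \<Sum>i\<in>UNIV. g (states3 i j k))"
proof -
  have "(\<Sum>f\<in>UNIV. g f) = (\<Sum>(k, j, i)\<in>UNIV. g (states3 i j k))"
    by (rule sum.reindex_bij_witness[where i = "\<lambda>(k, j, i). states3 i j k"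
          and j = "\<lambda>f. (f Tc, f Tb, f Ta)"]) (auto simp: states3_eta)
  then show ?thesis
    by (simp add: sum.cartesian_product UNIV_Times_UNIV[symmetric] del: UNIV_Times_UNIV)
qed

lemma sum_swap_triple:
  "(\<Sum>j\<in>J. \<Sum>a\<in>A. \<Sum>b\<in>B. \<Sum>c\<in>C. f j a b c) = (\<Sum>a\<in>A. \<Sum>b\<in>B. \<Sum>c\<in>C. \<Sum>j\<in>J. f j a b c)"
proof -
  have "(\<Sum>j\<in>J. \<Sum>a\<in>A. \<Sum>b\<in>B. \<Sum>c\<in>C. f j a b c) = (\<Sum>a\<in>A. \<Sum>j\<in>J. \<Sum>b\<in>B. \<Sum>c\<in>C. f j a b c)"
    by (rule sum.swap)
  also have "\<dots> = (\<Sum>a\<in>A. \<Sum>b\<in>B. \<Sum>j\<in>J. \<Sum>c\<in>C. f j a b c)"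
    by (rule sum.cong[OF refl], rule sum.swap)
  also have "\<dots> = (\<Sum>a\<in>A. \<Sum>b\<in>B. \<Sum>c\<in>C. \<Sum>j\<in>J. f j a b c)"
    by (rule sum.cong[OF refl], rule sum.cong[OF refl], rule sum.swap)
  finally show ?thesis .
qed

lemma ent_act:
  fixes P :: "(taxon, 'k::finite) tensor"
  shows "ent (act P M) i j k = (\<Sum>c\<in>UNIV. \<Sum>b\<in>UNIV. \<Sum>a\<in>UNIV.
     ent P a b c * M Ta $ a $ i * M Tb $ b $ j * M Tc $ c $ k)"
  unfolding ent_states3 act_def
    sum_taxon_fun[where g = "\<lambda>f. P f * (\<Prod>x\<in>UNIV. M x $ f x $ states3 i j k x)"]
  by (simp add: UNIV_taxon mult.assoc)

lemma slice_act:
  "slice (act P M) k = (\<Sum>c\<in>UNIV. M Tc $ c $ k *\<^sub>R (transpose (M Ta) ** slice P c ** M Tb))"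
  by (simp add: vec_eq_iff matrix_matrix_mult_def transpose_def slice_def ent_act
      sum_distrib_left sum_distrib_right mult_ac)

lemma margB_act:
  assumes "markov (M Tb)"
  shows "margB (act P M) = transpose (M Ta) ** margB P ** M Tc"
proof -
  have "margB (act P M) $ i $ k = (\<Sum>c\<in>UNIV. \<Sum>a\<in>UNIV. \<Sum>b\<in>UNIV.
      ent P a b c * M Ta $ a $ i * M Tc $ c $ k)" for i k
  proof -
    have "margB (act P M) $ i $ k = (\<Sum>c\<in>UNIV. \<Sum>b\<in>UNIV. \<Sum>a\<in>UNIV.
        \<Sum>j\<in>UNIV. ent P a b c * M Ta $ a $ i * M Tb $ b $ j * M Tc $ c $ k)"
      unfolding margB_def ent_act vec_lambda_beta by (rule sum_swap_triple)
    also have "\<dots> = (\<Sum>c\<in>UNIV. \<Sum>b\<in>UNIV. \<Sum>a\<in>UNIV. ent P a b c * M Ta $ a $ i * M Tc $ c $ k)"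
      using assms by (simp add: markov_def sum_distrib_left[symmetric] sum_distrib_right[symmetric])
    also have "\<dots> = (\<Sum>c\<in>UNIV. \<Sum>a\<in>UNIV. \<Sum>b\<in>UNIV. ent P a b c * M Ta $ a $ i * M Tc $ c $ k)"
      by (rule sum.cong[OF refl], rule sum.swap)
    finally show ?thesis .
  qed
  then show ?thesis
    by (simp add: vec_eq_iff matrix_matrix_mult_def transpose_def margB_def
      sum_distrib_left sum_distrib_right mult_ac)
qed

lemma margA_act:
  assumes "markov (M Ta)"
  shows "margA (act P M) = transpose (M Tb) ** margA P ** M Tc"
proof -
  have "margA (act P M) $ j $ k = (\<Sum>c\<in>UNIV. \<Sum>b\<in>UNIV. \<Sum>a\<in>UNIV.
      ent P a b c * M Tb $ b $ j * M Tc $ c $ k)" for j k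
  proof -
    have "margA (act P M) $ j $ k = (\<Sum>c\<in>UNIV. \<Sum>b\<in>UNIV. \<Sum>a\<in>UNIV.
        \<Sum>i\<in>UNIV. ent P a b c * M Ta $ a $ i * M Tb $ b $ j * M Tc $ c $ k)"
      unfolding margA_def ent_act vec_lambda_beta by (rule sum_swap_triple)
    also have "\<dots> = (\<Sum>c\<in>UNIV. \<Sum>b\<in>UNIV. \<Sum>a\<in>UNIV. ent P a b c * M Tb $ b $ j * M Tc $ c $ k)"
      using assms by (simp add: markov_def sum_distrib_left[symmetric] sum_distrib_right[symmetric]
        mult.commute[of "ent P _ _ _"])
    finally show ?thesis .
  qed
  then show ?thesis
    by (simp add: vec_eq_iff matrix_matrix_mult_def transpose_def margA_def
      sum_distrib_left sum_distrib_right mult_ac)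
qed

lemma states3_comp_transpose:
  "states3 i j k \<circ> Transposition.transpose Ta Tb = states3 j i k"
  "states3 i j k \<circ> Transposition.transpose Ta Tc = states3 k j i"
  by (rule ext, case_tac x, simp_all add: Transposition.transpose_def)+

lemma marg_UNIV: "marg P UNIV f = P f"
proof -
  have "{i. \<forall>y\<in>UNIV. i y = f y} = {f}"
    by auto
  then show ?thesis
    by (simp add: marg_def)
qed

lemma marg_ac_states3:
  "marg P {Ta, Tc} (states3 i j k) = (\<Sum>j'\<in>UNIV. ent P i j' k)"
  unfolding marg_def ent_states3
  by (rule sum.reindex_bij_witness[where i = "\<lambda>j'. states3 i j' k" and j = "\<lambda>f. f Tb"])
    (auto simp: states3_eta[unfolded states3_def] fun_eq_iff states3_def split: taxon.split)

lemma UE_ab_c_swap_ab: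
  assumes "Q \<in> UE tree_ab_c"
  shows "ent Q i j k = ent Q j i k"
proof -
  have "two_clade tree_ab_c UNIV Ta Tb"
    unfolding two_clade_def induced_clusters_def tree_ab_c_def by blast
  then have "marg Q UNIV f = marg Q UNIV (f \<circ> Transposition.transpose Ta Tb)" for f
    using assms unfolding UE_def by blast
  from this[of "states3 i j k"] show ?thesis
    by (simp add: marg_UNIV states3_comp_transpose ent_states3)
qed

lemma UE_ab_c_swap_ac:
  assumes "Q \<in> UE tree_ab_c"
  shows "(\<Sum>j\<in>UNIV. ent Q i j k) = (\<Sum>j\<in>UNIV. ent Q k j i)"
proof -
  have "two_clade tree_ab_c {Ta, Tc} Ta Tc"
    unfolding two_clade_def induced_clusters_def tree_ab_c_def by blast
  then have "marg Q {Ta, Tc} f = marg Q {Ta, Tc} (f \<circ> Transposition.transpose Ta Tc)" for f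
    using assms unfolding UE_def by blast
  from this[of "states3 i k k"] show ?thesis
    by (simp add: marg_ac_states3 states3_comp_transpose)
qed

lemma UE_ab_c_slice_symmetric: "Q \<in> UE tree_ab_c \<Longrightarrow> transpose (slice Q k) = slice Q k"
  by (simp add: vec_eq_iff transpose_def slice_def UE_ab_c_swap_ab)

lemma UE_ab_c_margB_symmetric: "Q \<in> UE tree_ab_c \<Longrightarrow> transpose (margB Q) = margB Q"
  by (simp add: vec_eq_iff transpose_def margB_def UE_ab_c_swap_ac)

lemma UE_ab_c_margA_eq_margB:
  assumes "Q \<in> UE tree_ab_c"
  shows "margA Q = margB Q"
  unfolding vec_eq_iff margA_def margB_def vec_lambda_beta
  by (intro allI sum.cong refl UE_ab_c_swap_ab[OF assms])

lemma sum_coefficients_inverse: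
  fixes Q W :: "'k::finite \<Rightarrow> 'a::real_vector"
  assumes "C ** N = mat 1" and "\<And>k. W k = (\<Sum>c\<in>UNIV. C $ c $ k *\<^sub>R Q c)"
  shows "Q c0 = (\<Sum>k\<in>UNIV. N $ k $ c0 *\<^sub>R W k)"
proof -
  have "(\<Sum>k\<in>UNIV. N $ k $ c0 *\<^sub>R W k)
      = (\<Sum>k\<in>UNIV. \<Sum>c\<in>UNIV. (C $ c $ k * N $ k $ c0) *\<^sub>R Q c)"
    by (simp add: assms(2) scaleR_sum_right mult.commute)
  also have "\<dots> = (\<Sum>c\<in>UNIV. (\<Sum>k\<in>UNIV. C $ c $ k * N $ k $ c0) *\<^sub>R Q c)"
    by (subst sum.swap) (simp add: scaleR_sum_left)
  also have "\<dots> = (\<Sum>c\<in>UNIV. (if c = c0 then 1 else 0) *\<^sub>R Q c)"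
    using arg_cong[OF assms(1), of "\<lambda>A. A $ _ $ c0"] by (simp add: matrix_matrix_mult_def mat_def)
  also have "\<dots> = (\<Sum>c\<in>UNIV. if c = c0 then Q c else 0)"
    by (rule sum.cong) auto
  also have "\<dots> = Q c0"
    by simp
  finally show ?thesis ..
qed

lemma UE_ab_c_slice_congruence_symmetric:
  assumes "invertible (M Tc)" and "act P M \<in> UE tree_ab_c"
  shows "transpose (transpose (M Ta) ** slice P k ** M Tb) = transpose (M Ta) ** slice P k ** M Tb"
proof -
  obtain N where "M Tc ** N = mat 1"
    using assms(1) unfolding invertible_def by blast
  then have "transpose (M Ta) ** slice P k ** M Tb = (\<Sum>k'\<in>UNIV. N $ k' $ k *\<^sub>R slice (act P M) k')"
    by (rule sum_coefficients_inverse) (simp add: slice_act)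
  then show ?thesis
    using UE_ab_c_slice_symmetric[OF assms(2)] by (simp add: vec_eq_iff transpose_def)
qed

theorem corollary6p4:
  fixes P :: "(taxon, 'k::finite) tensor"
  assumes "CARD('k) \<ge> 2"
    and "P \<in> EE tree_ab_c"
  shows "\<forall>k. rank (skew3 (slice P k) (margB P) (margA P)) \<le> 2 * CARD('k)
          \<and> rank (skew3 (transpose (margB P)) (transpose (margA P)) (slice P k)) \<le> 2 * CARD('k)"
proof (intro allI conjI)
  fix k :: 'k
  obtain M Pt where M: "\<And>x. markov (M x) \<and> invertible (M x)"
    and UE: "Pt \<in> UE tree_ab_c" and Pt: "act P M = Pt"
    using assms(2) unfolding EE_def by blast
  have inv: "invertible (M x)" for x
    using M by blast
  define S where "S = transpose (M Ta) ** slice P k ** M Tb"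
  define T where "T = margB Pt"
  have S_symmetric: "transpose S = S"
    unfolding S_def using inv UE Pt by (simp add: UE_ab_c_slice_congruence_symmetric)
  have T_symmetric: "transpose T = T"
    unfolding T_def by (rule UE_ab_c_margB_symmetric[OF UE])
  have B: "transpose (M Ta) ** margB P ** M Tc = T"
    unfolding T_def Pt[symmetric] using M by (simp add: margB_act)
  have "transpose (M Tb) ** margA P ** M Tc = margA Pt"
    unfolding Pt[symmetric] using M by (simp add: margA_act)
  then have A: "transpose (M Tb) ** margA P ** M Tc = T"
    unfolding T_def UE_ab_c_margA_eq_margB[OF UE] .
  show "rank (skew3 (slice P k) (margB P) (margA P)) \<le> 2 * CARD('k)"
    using rank_skew3_congruence[OF inv[of Ta] inv[of Tb] inv[of Tc], of "slice P k" "margB P" "margA P"]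
      rank_skew3_symmetric_STT[OF S_symmetric, of T]
    unfolding A B S_def[symmetric] by linarith
  have Bt: "transpose (M Tc) ** transpose (margB P) ** M Ta = T"
    and At: "transpose (M Tc) ** transpose (margA P) ** M Tb = T"
    using arg_cong[OF A, of transpose] arg_cong[OF B, of transpose] T_symmetric
    by (simp_all add: matrix_transpose_mul matrix_mul_assoc)
  show "rank (skew3 (transpose (margB P)) (transpose (margA P)) (slice P k)) \<le> 2 * CARD('k)"
    using rank_skew3_congruence[OF inv[of Tc] inv[of Ta] inv[of Tb],
        of "transpose (margB P)" "transpose (margA P)" "slice P k"]
      rank_skew3_symmetric_TTS[OF S_symmetric, of T]
    unfolding At Bt S_def[symmetric] by linarith
qed

end
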